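(* Let $\mu>0$ and $f\in C([0,1])$. Then $|\mathscr{L}_n^K(f,x)-f(x)|=o(n^{-1})$ as $n\to+\infty$ for every $0<x<1$ if and only if $f$ is a classical solution on $(0,1)$ of the differential equation $A(x)f_\mu'(x)+B(x)f_\mu''(x)=0$, where $A(x):=\frac12+\frac{x-x^2}{2(1+\mu)}-x$ and $B(x):=\frac{x-x^2}{2}$; equivalently, $\big(1+\mu-x(1+2\mu)-x^2\big)f_\mu'(x)+(1+\mu)(x-x^2)f_\mu''(x)=0$, $0<x<1$.
   Context: Fix $\mu>0$. Let $\ln_\mu(x):=\ln(1+\mu+x)$ for $x\in[0,1]$, and for $f:[0,1]\to\mathbb{R}$ let $f_\mu(x):=f(x)/\ln_\mu(x)$. Let $p_{n,k}(y):=\binom{n}{k}y^k(1-y)^{n-k}$ and $a_{n+1}(x):=\dfrac{\ln\left(1+\frac{x}{(n+1)(1+\mu)}\right)}{\ln\left(1+\frac{1}{(n+1)(1+\mu)}\right)}$, $x\in[0,1]$. For $n\in\mathbb{N}$ define $\mathscr{L}_n^K(f,x)=\mathscr{L}_n^K f(x):=\ln_\mu(x)\sum_{k=0}^n p_{n,k}(a_{n+1}(x))\,(n+1)\int_{k/(n+1)}^{(k+1)/(n+1)} f_\mu(t)\,dt$, $x\in[0,1]$. *)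

theory Defs
  imports "HOL-Analysis.Analysis" "HOL-Library.Landau_Symbols"
begin

definition lnmu :: "real \<Rightarrow> real \<Rightarrow> real" where
  "lnmu \<mu> x = ln (1 + \<mu> + x)"

definition fmu :: "real \<Rightarrow> (real \<Rightarrow> real) \<Rightarrow> real \<Rightarrow> real" where
  "fmu \<mu> f x = f x / lnmu \<mu> x"

definition pnk :: "nat \<Rightarrow> nat \<Rightarrow> real \<Rightarrow> real" where
  "pnk n k y = real (n choose k) * y ^ k * (1 - y) ^ (n - k)"

definition aseq :: "real \<Rightarrow> nat \<Rightarrow> real \<Rightarrow> real" where
  "aseq \<mu> m x = ln (1 + x / (real m * (1 + \<mu>))) / ln (1 + 1 / (real m * (1 + \<mu>)))"

definition LK :: "real \<Rightarrow> nat \<Rightarrow> (real \<Rightarrow> real) \<Rightarrow> real \<Rightarrow> real" where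
  "LK \<mu> n f x = lnmu \<mu> x *
     (\<Sum>k=0..n. pnk n k (aseq \<mu> (n+1) x) * (real n + 1) *
        integral {real k / (real n + 1) .. (real k + 1) / (real n + 1)} (fmu \<mu> f))"

definition Acoef :: "real \<Rightarrow> real \<Rightarrow> real" where
  "Acoef \<mu> x = 1/2 + (x - x^2) / (2 * (1 + \<mu>)) - x"

definition Bcoef :: "real \<Rightarrow> real" where
  "Bcoef x = (x - x^2) / 2"

end

theory Submission
  imports Defs "HOL-Probability.Hoeffding" "HOL-Real_Asymp.Real_Asymp"
begin

(* Since LK mu n f x = ln_mu(x) K_n(f_mu)(a_{n+1}(x)) with K_n the Kantorovich operator, the
   left-hand side says that n (K_n g (a_{n+1} x) - g x) -> 0 at every interior x, where g = f_mu.

   If g is twice differentiable, this limit is A g' + B g'' (a Voronovskaja formula): expand g to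
   second order at x; the first two moments of K_n, together with
   n (a_{n+1}(x) - x) -> (x - x^2)/(2(1+mu)), produce A and B, the remainder is small near x, and
   Hoeffding's inequality for the binomial weights makes the cells far from x contribute o(1/n).

   Conversely, positivity of K_n yields a maximum principle: if the limit is positive on (a,b),
   a continuous P attains its maximum over [a,b] at an endpoint.  Applied to g + eps logit, where
   A logit' + B logit'' = 1/(2(1+mu)) > 0 and logit -> -infinity at 0, it shows in the limit
   eps -> 0 that g is nondecreasing on (0,1); so is -g, hence g is constant and solves the
   equation.  (The nonconstant solutions blow up logarithmically at 0 and 1.) *)

section \<open>Kantorovich operators\<close>

abbreviation kcell :: "nat \<Rightarrow> nat \<Rightarrow> real set" where
  "kcell n k \<equiv> {real k / (real n + 1) .. (real k + 1) / (real n + 1)}"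

definition kantorovich :: "nat \<Rightarrow> (real \<Rightarrow> real) \<Rightarrow> real \<Rightarrow> real" where
  "kantorovich n h y = (\<Sum>k\<le>n. Bernstein n k y * (real n + 1) * integral (kcell n k) h)"

lemma kcell_subset_unit: "k \<le> n \<Longrightarrow> kcell n k \<subseteq> {0..1}"
  by (auto simp: field_simps)

lemma kcell_bounds_le: "real k / (real n + 1) \<le> (real k + 1) / (real n + 1)"
  by (simp add: divide_right_mono)

lemma integrable_on_kcell:
  fixes h :: "real \<Rightarrow> real"
  assumes "continuous_on {0..1} h" "k \<le> n"
  shows "h integrable_on kcell n k"
  using continuous_on_subset[OF assms(1) kcell_subset_unit[OF assms(2)]]
  by (rule integrable_continuous_interval)

lemma kantorovich_add:
  assumes "continuous_on {0..1} h1" "continuous_on {0..1} h2"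
  shows "kantorovich n (\<lambda>t. h1 t + h2 t) y = kantorovich n h1 y + kantorovich n h2 y"
  unfolding kantorovich_def sum.distrib[symmetric]
  by (intro sum.cong refl) (simp add: integral_add integrable_on_kcell assms distrib_left)

lemma kantorovich_diff:
  assumes "continuous_on {0..1} h1" "continuous_on {0..1} h2"
  shows "kantorovich n (\<lambda>t. h1 t - h2 t) y = kantorovich n h1 y - kantorovich n h2 y"
  unfolding kantorovich_def sum_subtractf[symmetric]
  by (intro sum.cong refl) (simp add: integral_diff integrable_on_kcell assms right_diff_distrib)

lemma kantorovich_cmult: "kantorovich n (\<lambda>t. c * h t) y = c * kantorovich n h y"
  unfolding kantorovich_def by (simp add: sum_distrib_left algebra_simps)

lemma kantorovich_minus: "kantorovich n (\<lambda>t. - h t) y = - kantorovich n h y"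
  using kantorovich_cmult[of n "-1" h y] by simp

lemma kantorovich_const: "kantorovich n (\<lambda>t. c) y = c"
proof -
  have "kantorovich n (\<lambda>t. c) y = (\<Sum>k\<le>n. Bernstein n k y) * c"
    unfolding kantorovich_def sum_distrib_right
    by (intro sum.cong refl) (simp add: kcell_bounds_le field_simps)
  then show ?thesis by simp
qed

lemma integral_power_Icc:
  fixes a b :: real
  assumes "a \<le> b"
  shows "integral {a..b} (\<lambda>t. t ^ p) = (b ^ (p + 1) - a ^ (p + 1)) / (p + 1)"
proof -
  have "((\<lambda>t. t ^ (p + 1) / (p + 1)) has_real_derivative t ^ p) (at t)" for t :: real
    by (intro derivative_eq_intros) auto
  then have "((\<lambda>t. t ^ p) has_integral (b ^ (p + 1) / (p + 1) - a ^ (p + 1) / (p + 1))) {a..b}"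
    by (intro fundamental_theorem_of_calculus[OF assms])
       (auto simp: has_real_derivative_iff_has_vector_derivative[symmetric] intro: has_field_derivative_at_within)
  then show ?thesis by (simp add: integral_unique diff_divide_distrib)
qed

lemma integral_kcell_id: "integral (kcell n k) (\<lambda>t. t) = (2 * real k + 1) / (2 * (real n + 1)\<^sup>2)"
proof -
  define m where "m = real n + 1"
  have "m > 0" by (simp add: m_def)
  moreover have I: "integral {real k / m..(real k + 1) / m} (\<lambda>t. t) = (((real k + 1) / m)\<^sup>2 - (real k / m)\<^sup>2) / 2"
    using integral_power_Icc[OF kcell_bounds_le[of k n], where p = 1] by (simp add: m_def power2_eq_square)
  ultimately show ?thesis unfolding m_def[symmetric] I by (simp add: field_simps power2_eq_square)
qed

lemma integral_kcell_square:
  "integral (kcell n k) (\<lambda>t. t\<^sup>2) = (3 * real k * (real k - 1) + 6 * real k + 1) / (3 * (real n + 1) ^ 3)"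
proof -
  define m where "m = real n + 1"
  have "m > 0" by (simp add: m_def)
  moreover have I: "integral {real k / m..(real k + 1) / m} (\<lambda>t. t\<^sup>2) = (((real k + 1) / m) ^ 3 - (real k / m) ^ 3) / 3"
    using integral_power_Icc[OF kcell_bounds_le[of k n], where p = 2] by (simp add: m_def power3_eq_cube)
  ultimately show ?thesis unfolding m_def[symmetric] I by (simp add: field_simps power3_eq_cube)
qed

lemma kantorovich_id: "kantorovich n (\<lambda>t. t) y = (2 * real n * y + 1) / (2 * (real n + 1))"
proof -
  define m where "m = real n + 1"
  have m: "m > 0" by (simp add: m_def)
  have "kantorovich n (\<lambda>t. t) y =
      (\<Sum>k\<le>n. real k * Bernstein n k y) / m + (\<Sum>k\<le>n. Bernstein n k y) / (2 * m)"
    unfolding kantorovich_def integral_kcell_id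
    unfolding sum_divide_distrib sum.distrib[symmetric] m_def[symmetric]
    using m by (intro sum.cong refl) (simp add: field_simps power2_eq_square)
  then show ?thesis unfolding m_def[symmetric] using m by (simp add: field_simps)
qed

lemma kantorovich_square:
  "kantorovich n (\<lambda>t. t\<^sup>2) y = (3 * real n * (real n - 1) * y\<^sup>2 + 6 * real n * y + 1) / (3 * (real n + 1)\<^sup>2)"
proof -
  define m where "m = real n + 1"
  have m: "m > 0" by (simp add: m_def)
  have "kantorovich n (\<lambda>t. t\<^sup>2) y =
      (\<Sum>k\<le>n. real k * (real k - 1) * Bernstein n k y) / m\<^sup>2
      + 2 * (\<Sum>k\<le>n. real k * Bernstein n k y) / m\<^sup>2
      + (\<Sum>k\<le>n. Bernstein n k y) / (3 * m\<^sup>2)"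
    unfolding kantorovich_def integral_kcell_square
    unfolding sum_divide_distrib sum_distrib_left
      sum.distrib[symmetric] m_def[symmetric]
    using m by (intro sum.cong refl) (simp add: field_simps power2_eq_square power3_eq_cube)
  also have "\<dots> = real n * (real n - 1) * y\<^sup>2 / m\<^sup>2 + 2 * (real n * y) / m\<^sup>2 + 1 / (3 * m\<^sup>2)"
    by simp
  finally show ?thesis unfolding m_def[symmetric] using m by (simp add: field_simps)
qed

lemma kantorovich_centered_square:
  "kantorovich n (\<lambda>t. (t - x)\<^sup>2) y = kantorovich n (\<lambda>t. t\<^sup>2) y - 2 * x * kantorovich n (\<lambda>t. t) y + x\<^sup>2"
proof -
  have "(\<lambda>t. (t - x)\<^sup>2) = (\<lambda>t. (t\<^sup>2 - 2 * x * t) + x\<^sup>2)"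
    by (auto simp: power2_eq_square algebra_simps)
  then have "kantorovich n (\<lambda>t. (t - x)\<^sup>2) y = kantorovich n (\<lambda>t. t\<^sup>2 - 2 * x * t) y + x\<^sup>2"
    by (simp add: kantorovich_add kantorovich_const continuous_intros)
  also have "kantorovich n (\<lambda>t. t\<^sup>2 - 2 * x * t) y = kantorovich n (\<lambda>t. t\<^sup>2) y - 2 * x * kantorovich n (\<lambda>t. t) y"
    by (simp add: kantorovich_diff kantorovich_cmult continuous_intros)
  finally show ?thesis .
qed

lemma kantorovich_first_moment_tendsto:
  assumes "(\<lambda>n. real n * (y n - x)) \<longlonglongrightarrow> d" "y \<longlonglongrightarrow> x"
  shows "(\<lambda>n. real n * kantorovich n (\<lambda>t. t - x) (y n)) \<longlonglongrightarrow> (1 - 2 * x) / 2 + d"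
proof -
  have "real n * kantorovich n (\<lambda>t. t - x) (y n) =
      real n / (real n + 1) * ((1 - 2 * y n) / 2) + real n * (y n - x)" for n
    by (simp add: kantorovich_diff kantorovich_id kantorovich_const field_simps)
  moreover have "(\<lambda>n. real n / (real n + 1)) \<longlonglongrightarrow> 1"
    by real_asymp
  then have "(\<lambda>n. real n / (real n + 1) * ((1 - 2 * y n) / 2) + real n * (y n - x))
      \<longlonglongrightarrow> 1 * ((1 - 2 * x) / 2) + d"
    by (intro tendsto_intros assms) simp_all
  ultimately show ?thesis by simp
qed

lemma kantorovich_second_moment_tendsto:
  assumes "(\<lambda>n. real n * (y n - x)) \<longlonglongrightarrow> d" "y \<longlonglongrightarrow> x"
  shows "(\<lambda>n. real n * kantorovich n (\<lambda>t. (t - x)\<^sup>2) (y n)) \<longlonglongrightarrow> x - x\<^sup>2"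
proof -
  \<comment> \<open>The first two summands are \<open>n K\<^sub>n((t - y\<^sub>n)\<^sup>2)(y\<^sub>n)\<close>, the last one the shift from \<open>y\<^sub>n\<close> to \<open>x\<close>.\<close>
  have eq: "real n * kantorovich n (\<lambda>t. (t - x)\<^sup>2) (y n) =
      real n * (real n - 1) / (real n + 1)\<^sup>2 * (y n * (1 - y n)) + real n / (3 * (real n + 1)\<^sup>2)
      + real n * (y n - x) * ((1 - 2 * y n) * (1 / (real n + 1)) + (y n - x))" for n
  proof -
    obtain m where m: "m > 0" "real n = m - 1"
      by (rule that[of "real n + 1"]) simp_all
    show ?thesis
      unfolding kantorovich_centered_square kantorovich_square kantorovich_id m(2)
      using m(1) by (simp add: field_simps power2_eq_square)
  qed
  have "(\<lambda>n. real n * (real n - 1) / (real n + 1)\<^sup>2) \<longlonglongrightarrow> 1"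
    "(\<lambda>n. real n / (3 * (real n + 1)\<^sup>2)) \<longlonglongrightarrow> 0" "(\<lambda>n. 1 / (real n + 1)) \<longlonglongrightarrow> 0"
    by real_asymp+
  then have "(\<lambda>n. real n * (real n - 1) / (real n + 1)\<^sup>2 * (y n * (1 - y n)) + real n / (3 * (real n + 1)\<^sup>2)
      + real n * (y n - x) * ((1 - 2 * y n) * (1 / (real n + 1)) + (y n - x)))
      \<longlonglongrightarrow> 1 * (x * (1 - x)) + 0 + d * ((1 - 2 * x) * 0 + (x - x))"
    by (intro tendsto_intros assms)
  moreover have "1 * (x * (1 - x)) + 0 + d * ((1 - 2 * x) * 0 + (x - x)) = x - x\<^sup>2"
    by (simp add: algebra_simps power2_eq_square)
  ultimately show ?thesis by (simp only: eq)
qed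

section \<open>Localisation\<close>

definition kantorovich_tail :: "nat \<Rightarrow> real \<Rightarrow> real \<Rightarrow> real \<Rightarrow> real" where
  "kantorovich_tail n y x \<eta> = (\<Sum>k\<le>n. if \<exists>t\<in>kcell n k. \<eta> \<le> \<bar>t - x\<bar> then Bernstein n k y else 0)"

lemma integral_kcell_const: "integral (kcell n k) (\<lambda>t. c) = c / (real n + 1)"
  using kcell_bounds_le[of k n] by (simp add: field_simps)

lemma kantorovich_le_tail:
  fixes \<phi> \<psi> :: "real \<Rightarrow> real"
  assumes y: "y \<in> {0..1}" and cont: "continuous_on {0..1} \<phi>" "continuous_on {0..1} \<psi>"
    and near: "\<And>t. t \<in> {0..1} \<Longrightarrow> \<bar>t - x\<bar> < \<eta> \<Longrightarrow> \<phi> t \<le> \<psi> t"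
    and far: "\<And>t. t \<in> {0..1} \<Longrightarrow> \<phi> t \<le> \<psi> t + C"
  shows "kantorovich n \<phi> y \<le> kantorovich n \<psi> y + C * kantorovich_tail n y x \<eta>"
proof -
  define c where "c k = (if \<exists>t\<in>kcell n k. \<eta> \<le> \<bar>t - x\<bar> then C else 0)" for k
  have cell: "integral (kcell n k) \<phi> \<le> integral (kcell n k) \<psi> + c k / (real n + 1)" if k: "k \<le> n" for k
  proof -
    have "integral (kcell n k) \<phi> \<le> integral (kcell n k) (\<lambda>t. \<psi> t + c k)"
    proof (intro integral_le integrable_add integrable_const_ivl integrable_on_kcell cont k ballI)
      fix t assume t: "t \<in> kcell n k"
      then have t01: "t \<in> {0..1}" using kcell_subset_unit[OF k] by blast
      show "\<phi> t \<le> \<psi> t + c k"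
      proof (cases "\<exists>t\<in>kcell n k. \<eta> \<le> \<bar>t - x\<bar>")
        case False
        then have "\<bar>t - x\<bar> < \<eta>" using t by force
        then show ?thesis using near[OF t01] False by (simp add: c_def)
      qed (use far[OF t01] in \<open>simp add: c_def\<close>)
    qed
    also have "\<dots> = integral (kcell n k) \<psi> + c k / (real n + 1)"
      by (simp add: integral_add integrable_on_kcell cont k integral_kcell_const del: integral_const_real)
    finally show ?thesis .
  qed
  have "kantorovich n \<phi> y \<le>
      (\<Sum>k\<le>n. Bernstein n k y * (real n + 1) * (integral (kcell n k) \<psi> + c k / (real n + 1)))"
    unfolding kantorovich_def using cell y
    by (intro sum_mono mult_left_mono) (auto intro!: mult_nonneg_nonneg Bernstein_nonneg)
  also have "\<dots> = kantorovich n \<psi> y + C * kantorovich_tail n y x \<eta>"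
    unfolding kantorovich_def kantorovich_tail_def sum_distrib_left sum.distrib[symmetric]
    by (intro sum.cong refl) (simp add: c_def field_simps)
  finally show ?thesis .
qed

lemma kcell_near_grid:
  assumes "k \<le> n" "t \<in> kcell n k"
  shows "\<bar>t - real k / real n\<bar> \<le> 1 / (real n + 1)"
proof (cases "n = 0")
  case False
  then have "real k / (real n + 1) \<le> real k / real n" "real k / real n \<le> (real k + 1) / (real n + 1)"
    using assms(1) by (simp_all add: frac_le field_simps)
  moreover have "(real k + 1) / (real n + 1) = real k / (real n + 1) + 1 / (real n + 1)"
    by (simp add: add_divide_distrib)
  ultimately show ?thesis using assms(2) by (simp add: abs_le_iff)
qed (use assms in auto)

lemma binomial_tail_le:
  assumes "y \<in> {0..1}" "n > 0" "\<epsilon> \<ge> 0"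
  shows "(\<Sum>k\<le>n. if \<epsilon> \<le> \<bar>real k / real n - y\<bar> then Bernstein n k y else 0) \<le> 2 * exp (-2 * real n * \<epsilon>\<^sup>2)"
proof -
  interpret binomial_distribution n y using assms(1) by unfold_locales
  define S where "S = {k \<in> {..n}. \<epsilon> \<le> \<bar>real k / real n - y\<bar>}"
  have "(\<Sum>k\<le>n. if \<epsilon> \<le> \<bar>real k / real n - y\<bar> then Bernstein n k y else 0) = (\<Sum>k\<in>S. Bernstein n k y)"
    unfolding S_def by (rule sum.inter_filter[symmetric]) simp
  also have "\<dots> = (\<Sum>k\<in>S. pmf (binomial_pmf n y) k)"
    using assms(1) by (intro sum.cong) (auto simp: S_def Bernstein_def)
  also have "\<dots> = measure_pmf.prob (binomial_pmf n y) S"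
    by (simp add: S_def measure_measure_pmf_finite)
  also have "\<dots> \<le> measure_pmf.prob (binomial_pmf n y) {k. \<epsilon> \<le> \<bar>real k / real n - y\<bar>}"
    by (intro measure_pmf.finite_measure_mono) (auto simp: S_def)
  also have "\<dots> \<le> 2 * exp (-2 * real n * \<epsilon>\<^sup>2)"
    using prob_abs_ge'[OF assms(2,3)] by simp
  finally show ?thesis .
qed

lemma kantorovich_tail_le_exp:
  assumes y: "y \<in> {0..1}" and "n > 0" "\<bar>y - x\<bar> < \<eta>/4" "1 / (real n + 1) < \<eta>/4"
  shows "kantorovich_tail n y x \<eta> \<le> 2 * exp (-2 * real n * (\<eta>/2)\<^sup>2)"
proof -
  have "kantorovich_tail n y x \<eta> \<le> (\<Sum>k\<le>n. if \<eta>/2 \<le> \<bar>real k / real n - y\<bar> then Bernstein n k y else 0)"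
    unfolding kantorovich_tail_def
  proof (intro sum_mono)
    fix k assume k: "k \<in> {..n}"
    show "(if \<exists>t\<in>kcell n k. \<eta> \<le> \<bar>t - x\<bar> then Bernstein n k y else 0)
        \<le> (if \<eta>/2 \<le> \<bar>real k / real n - y\<bar> then Bernstein n k y else 0)"
    proof (cases "\<exists>t\<in>kcell n k. \<eta> \<le> \<bar>t - x\<bar>")
      case True
      then obtain t where t: "t \<in> kcell n k" "\<eta> \<le> \<bar>t - x\<bar>" by blast
      have "\<bar>t - real k / real n\<bar> < \<eta>/4"
        using kcell_near_grid[OF _ t(1)] k assms(4) by fastforce
      then have "\<eta>/2 \<le> \<bar>real k / real n - y\<bar>" using t(2) assms(3) by arith
      then show ?thesis using True by simp
    qed (use Bernstein_nonneg[of y n k] y in auto)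
  qed
  also have "\<dots> \<le> 2 * exp (-2 * real n * (\<eta>/2)\<^sup>2)"
  proof (rule binomial_tail_le)
    show "0 \<le> \<eta>/2" using abs_ge_zero[of "y - x"] assms(3) by linarith
  qed (use assms in auto)
  finally show ?thesis .
qed

lemma kantorovich_tail_tendsto_zero:
  assumes y01: "\<And>n. y n \<in> {0..1}" and y: "y \<longlonglongrightarrow> x" and "\<eta> > 0"
  shows "(\<lambda>n. real n * kantorovich_tail n (y n) x \<eta>) \<longlonglongrightarrow> 0"
proof (rule tendsto_sandwich[where f = "\<lambda>_. 0" and h = "\<lambda>n. real n * (2 * exp (-2 * real n * (\<eta>/2)\<^sup>2))"])
  show "eventually (\<lambda>n. 0 \<le> real n * kantorovich_tail n (y n) x \<eta>) sequentially"
  proof (intro always_eventually allI mult_nonneg_nonneg)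
    show "0 \<le> kantorovich_tail n (y n) x \<eta>" for n
      unfolding kantorovich_tail_def using y01[of n] by (auto intro!: sum_nonneg Bernstein_nonneg)
  qed simp
  have "(\<lambda>n. 1 / (real n + 1)) \<longlonglongrightarrow> 0"
    by real_asymp
  from order_tendstoD(2)[OF this, of "\<eta>/4"]
  have "eventually (\<lambda>n. 1 / (real n + 1) < \<eta>/4) sequentially"
    using \<open>\<eta> > 0\<close> by simp
  moreover have "eventually (\<lambda>n. \<bar>y n - x\<bar> < \<eta>/4) sequentially"
    using tendstoD[OF y, of "\<eta>/4"] \<open>\<eta> > 0\<close> by (simp add: dist_real_def)
  ultimately show "eventually (\<lambda>n. real n * kantorovich_tail n (y n) x \<eta> \<le>
      real n * (2 * exp (-2 * real n * (\<eta>/2)\<^sup>2))) sequentially"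
    using eventually_gt_at_top[of 0]
    by eventually_elim (intro mult_left_mono kantorovich_tail_le_exp y01; simp)
  show "(\<lambda>n. real n * (2 * exp (-2 * real n * (\<eta>/2)\<^sup>2))) \<longlonglongrightarrow> 0"
    using \<open>\<eta> > 0\<close> by real_asymp
qed simp

section \<open>A Voronovskaja formula\<close>

lemma taylor2_remainder_le:
  fixes h h1 :: "real \<Rightarrow> real"
  assumes "\<delta> > 0" and d1: "\<And>t. \<bar>t - x\<bar> < \<delta> \<Longrightarrow> (h has_real_derivative h1 t) (at t)"
    and d2: "(h1 has_real_derivative h2) (at x)" and "\<epsilon> > 0"
  obtains \<eta> where "\<eta> > 0"
    "\<And>t. \<bar>t - x\<bar> < \<eta> \<Longrightarrow> \<bar>h t - h x - h1 x * (t - x) - h2 / 2 * (t - x)\<^sup>2\<bar> \<le> \<epsilon> * (t - x)\<^sup>2"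
proof -
  define R where "R t = h t - h x - h1 x * (t - x) - h2 / 2 * (t - x)\<^sup>2" for t
  define R' where "R' t = h1 t - h1 x - h2 * (t - x)" for t
  from d2 have "((\<lambda>s. (h1 s - h1 x) / (s - x)) \<longlongrightarrow> h2) (at x)"
    by (simp add: has_field_derivative_iff)
  then obtain \<eta>0 where "\<eta>0 > 0"
    and H: "\<And>s. s \<noteq> x \<Longrightarrow> \<bar>s - x\<bar> < \<eta>0 \<Longrightarrow> \<bar>(h1 s - h1 x) / (s - x) - h2\<bar> < \<epsilon>"
    using \<open>\<epsilon> > 0\<close> unfolding LIM_eq by (auto simp: dist_real_def)
  define \<eta> where "\<eta> = min \<eta>0 \<delta>"
  have "\<eta> > 0" using \<open>\<eta>0 > 0\<close> \<open>\<delta> > 0\<close> by (simp add: \<eta>_def)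
  have R': "\<bar>R' s\<bar> \<le> \<epsilon> * \<bar>s - x\<bar>" if "\<bar>s - x\<bar> < \<eta>" for s
  proof (cases "s = x")
    case False
    then have "R' s = ((h1 s - h1 x) / (s - x) - h2) * (s - x)"
      by (simp add: R'_def field_simps)
    with H[OF False] that show ?thesis by (simp add: \<eta>_def abs_mult mult_right_mono)
  qed (simp add: R'_def)
  have "\<bar>R t\<bar> \<le> \<epsilon> * (t - x)\<^sup>2" if t: "\<bar>t - x\<bar> < \<eta>" for t
  proof -
    have "norm (R t - R x) \<le> \<epsilon> * \<bar>t - x\<bar> * norm (t - x)"
    proof (rule field_differentiable_bound[where S = "cball x \<bar>t - x\<bar>" and f' = R'], simp_all)
      fix z assume z: "dist x z \<le> \<bar>t - x\<bar>"
      then have "\<bar>z - x\<bar> < \<eta>" using t by (simp add: dist_real_def abs_minus_commute)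
      then have "(R has_real_derivative R' z) (at z)"
        unfolding R_def R'_def using d1[of z]
        by (auto intro!: derivative_eq_intros simp: \<eta>_def power2_eq_square algebra_simps)
      then show "(R has_real_derivative R' z) (at z within cball x \<bar>t - x\<bar>)"
        by (rule has_field_derivative_at_within)
      have "\<bar>z - x\<bar> \<le> \<bar>t - x\<bar>" using z by (simp add: dist_real_def abs_minus_commute)
      from mult_left_mono[OF this, of \<epsilon>] show "\<bar>R' z\<bar> \<le> \<epsilon> * \<bar>t - x\<bar>"
        using R'[OF \<open>\<bar>z - x\<bar> < \<eta>\<close>] \<open>\<epsilon> > 0\<close> by linarith
    qed (simp add: dist_real_def abs_minus_commute)
    then show ?thesis by (simp add: R_def power2_eq_square abs_mult)
  qed
  then show thesis using that \<open>\<eta> > 0\<close> unfolding R_def by blast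
qed

lemma kantorovich_abs_le_tail:
  fixes R :: "real \<Rightarrow> real"
  assumes y: "y \<in> {0..1}" and Rc: "continuous_on {0..1} R" and "\<epsilon> \<ge> 0"
    and near: "\<And>t. \<bar>t - x\<bar> < \<eta> \<Longrightarrow> \<bar>R t\<bar> \<le> \<epsilon> * (t - x)\<^sup>2"
    and far: "\<And>t. t \<in> {0..1} \<Longrightarrow> \<bar>R t\<bar> \<le> C"
  shows "\<bar>kantorovich n R y\<bar> \<le> \<epsilon> * kantorovich n (\<lambda>t. (t - x)\<^sup>2) y + C * kantorovich_tail n y x \<eta>"
proof -
  have "kantorovich n F y \<le> kantorovich n (\<lambda>t. \<epsilon> * (t - x)\<^sup>2) y + C * kantorovich_tail n y x \<eta>"
    if F: "F = R \<or> F = (\<lambda>t. - R t)" for F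
  proof (rule kantorovich_le_tail[OF y])
    show "continuous_on {0..1} F" "continuous_on {0..1} (\<lambda>t. \<epsilon> * (t - x)\<^sup>2)"
      using F by (auto intro!: continuous_intros Rc)
    show "F t \<le> \<epsilon> * (t - x)\<^sup>2" if "\<bar>t - x\<bar> < \<eta>" for t
      using near[OF that] F by auto
    show "F t \<le> \<epsilon> * (t - x)\<^sup>2 + C" if "t \<in> {0..1}" for t
      using far[OF that] F \<open>\<epsilon> \<ge> 0\<close> by (auto simp: abs_le_iff add_increasing)
  qed
  from this[of R] this[of "\<lambda>t. - R t"] show ?thesis
    by (simp add: kantorovich_minus kantorovich_cmult abs_le_iff)
qed

lemma kantorovich_remainder_tendsto_zero:
  fixes R :: "real \<Rightarrow> real"
  assumes Rc: "continuous_on {0..1} R" and y01: "\<And>n. y n \<in> {0..1}" and y: "y \<longlonglongrightarrow> x"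
    and small: "\<And>\<epsilon>. \<epsilon> > 0 \<Longrightarrow> \<exists>\<eta>>0. \<forall>t. \<bar>t - x\<bar> < \<eta> \<longrightarrow> \<bar>R t\<bar> \<le> \<epsilon> * (t - x)\<^sup>2"
    and m2: "(\<lambda>n. real n * kantorovich n (\<lambda>t. (t - x)\<^sup>2) (y n)) \<longlonglongrightarrow> \<beta>"
  shows "(\<lambda>n. real n * kantorovich n R (y n)) \<longlonglongrightarrow> 0"
proof (rule tendstoI)
  fix e :: real assume "e > 0"
  define B where "B = \<bar>\<beta>\<bar> + 1"
  have "B > 0" "\<beta> < B" by (simp_all add: B_def add_pos_nonneg)
  define \<epsilon> where "\<epsilon> = e / (2 * B)"
  have "\<epsilon> > 0" using \<open>e > 0\<close> \<open>B > 0\<close> by (simp add: \<epsilon>_def)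
  then obtain \<eta> where "\<eta> > 0" and near: "\<And>t. \<bar>t - x\<bar> < \<eta> \<Longrightarrow> \<bar>R t\<bar> \<le> \<epsilon> * (t - x)\<^sup>2"
    using small by blast
  obtain C where far: "\<And>t. t \<in> {0..1} \<Longrightarrow> \<bar>R t\<bar> \<le> C"
    using continuous_on_compact_bound[OF compact_Icc Rc] by (metis real_norm_def)
  have "(\<lambda>n. C * (real n * kantorovich_tail n (y n) x \<eta>)) \<longlonglongrightarrow> C * 0"
    by (intro tendsto_intros kantorovich_tail_tendsto_zero y01 y \<open>\<eta> > 0\<close>)
  from order_tendstoD(2)[OF this, of "e/2"]
  have "eventually (\<lambda>n. C * (real n * kantorovich_tail n (y n) x \<eta>) < e/2) sequentially"
    using \<open>e > 0\<close> by simp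
  moreover have "eventually (\<lambda>n. real n * kantorovich n (\<lambda>t. (t - x)\<^sup>2) (y n) < B) sequentially"
    using order_tendstoD(2)[OF m2 \<open>\<beta> < B\<close>] .
  ultimately show "eventually (\<lambda>n. dist (real n * kantorovich n R (y n)) 0 < e) sequentially"
  proof eventually_elim
    case (elim n)
    have "\<bar>kantorovich n R (y n)\<bar> \<le>
        \<epsilon> * kantorovich n (\<lambda>t. (t - x)\<^sup>2) (y n) + C * kantorovich_tail n (y n) x \<eta>"
      by (rule kantorovich_abs_le_tail[OF y01 Rc _ near far]) (use \<open>\<epsilon> > 0\<close> in simp)
    from mult_left_mono[OF this, of "real n"]
    have "\<bar>real n * kantorovich n R (y n)\<bar> \<le>
        \<epsilon> * (real n * kantorovich n (\<lambda>t. (t - x)\<^sup>2) (y n)) + C * (real n * kantorovich_tail n (y n) x \<eta>)"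
      by (simp add: abs_mult algebra_simps)
    also have "\<dots> < \<epsilon> * B + e/2"
      using elim \<open>\<epsilon> > 0\<close> by (intro add_less_le_mono mult_strict_left_mono) auto
    also have "\<dots> = e" using \<open>B > 0\<close> by (simp add: \<epsilon>_def)
    finally show ?case by simp
  qed
qed

theorem kantorovich_voronovskaja:
  fixes h h1 :: "real \<Rightarrow> real"
  assumes hc: "continuous_on {0..1} h" and y01: "\<And>n. y n \<in> {0..1}" and y: "y \<longlonglongrightarrow> x"
    and d: "(\<lambda>n. real n * (y n - x)) \<longlonglongrightarrow> d"
    and "\<delta> > 0" and d1: "\<And>t. \<bar>t - x\<bar> < \<delta> \<Longrightarrow> (h has_real_derivative h1 t) (at t)"
    and d2: "(h1 has_real_derivative h2) (at x)"
  shows "(\<lambda>n. real n * (kantorovich n h (y n) - h x)) \<longlonglongrightarrow> ((1 - 2 * x) / 2 + d) * h1 x + (x - x\<^sup>2) / 2 * h2"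
proof -
  define c where "c = h2 / 2"
  define R where "R t = h t - h x - h1 x * (t - x) - c * (t - x)\<^sup>2" for t
  have Rc: "continuous_on {0..1} R"
    unfolding R_def by (intro continuous_intros hc)
  have KR: "kantorovich n R z =
      kantorovich n h z - h x - h1 x * kantorovich n (\<lambda>t. t - x) z - c * kantorovich n (\<lambda>t. (t - x)\<^sup>2) z" for n z
    unfolding R_def by (simp add: kantorovich_diff kantorovich_cmult kantorovich_const continuous_intros hc)
  have dec: "real n * (kantorovich n h (y n) - h x) =
      h1 x * (real n * kantorovich n (\<lambda>t. t - x) (y n))
      + c * (real n * kantorovich n (\<lambda>t. (t - x)\<^sup>2) (y n)) + real n * kantorovich n R (y n)" for n
    unfolding KR by (simp add: algebra_simps)
  have m2: "(\<lambda>n. real n * kantorovich n (\<lambda>t. (t - x)\<^sup>2) (y n)) \<longlonglongrightarrow> x - x\<^sup>2"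
    by (rule kantorovich_second_moment_tendsto[OF d y])
  have "(\<lambda>n. real n * kantorovich n R (y n)) \<longlonglongrightarrow> 0"
  proof (rule kantorovich_remainder_tendsto_zero[OF Rc y01 y _ m2])
    fix \<epsilon> :: real assume "\<epsilon> > 0"
    with taylor2_remainder_le[OF \<open>\<delta> > 0\<close> d1 d2] show "\<exists>\<eta>>0. \<forall>t. \<bar>t - x\<bar> < \<eta> \<longrightarrow> \<bar>R t\<bar> \<le> \<epsilon> * (t - x)\<^sup>2"
      unfolding R_def c_def by metis
  qed
  then have "(\<lambda>n. h1 x * (real n * kantorovich n (\<lambda>t. t - x) (y n))
      + c * (real n * kantorovich n (\<lambda>t. (t - x)\<^sup>2) (y n)) + real n * kantorovich n R (y n))
      \<longlonglongrightarrow> h1 x * ((1 - 2 * x) / 2 + d) + c * (x - x\<^sup>2) + 0"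
    by (intro tendsto_intros kantorovich_first_moment_tendsto[OF d y] m2)
  moreover have "h1 x * ((1 - 2 * x) / 2 + d) + c * (x - x\<^sup>2) + 0 = ((1 - 2 * x) / 2 + d) * h1 x + (x - x\<^sup>2) / 2 * h2"
    by (simp add: c_def)
  ultimately show ?thesis by (simp only: dec)
qed

lemma aseq_in_unit:
  assumes "-1 < \<mu>" "0 \<le> x" "x \<le> 1"
  shows "aseq \<mu> (n+1) x \<in> {0..1}"
proof -
  define c where "c = real (n+1) * (1 + \<mu>)"
  have c: "c > 0" unfolding c_def using assms by simp
  have "0 \<le> x / c" "x / c \<le> 1 / c" using c assms by (simp_all add: divide_right_mono)
  then have "0 \<le> ln (1 + x / c)" "ln (1 + x / c) \<le> ln (1 + 1 / c)" "0 < ln (1 + 1 / c)"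
    using c by simp_all
  then show ?thesis unfolding aseq_def c_def[symmetric] by simp
qed

lemma aseq_tendsto:
  assumes "-1 < \<mu>" "0 < x"
  shows "(\<lambda>n. aseq \<mu> (n+1) x) \<longlonglongrightarrow> x"
proof -
  define c where "c = 1 + \<mu>"
  have "c > 0" using assms by (simp add: c_def)
  then show ?thesis unfolding aseq_def c_def[symmetric] using assms by real_asymp
qed

lemma aseq_rate:
  assumes "-1 < \<mu>" "0 < x"
  shows "(\<lambda>n. real n * (aseq \<mu> (n+1) x - x)) \<longlonglongrightarrow> (x - x\<^sup>2) / (2 * (1 + \<mu>))"
proof -
  define c where "c = 1 + \<mu>"
  have "c > 0" using assms by (simp add: c_def)
  then show ?thesis unfolding aseq_def c_def[symmetric] using assms
    by real_asymp (simp add: field_simps power2_eq_square)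
qed

definition scaled_error :: "real \<Rightarrow> (real \<Rightarrow> real) \<Rightarrow> real \<Rightarrow> nat \<Rightarrow> real" where
  "scaled_error \<mu> h x n = real n * (kantorovich n h (aseq \<mu> (n+1) x) - h x)"

lemma scaled_error_add:
  assumes "continuous_on {0..1} g" "continuous_on {0..1} h"
  shows "scaled_error \<mu> (\<lambda>t. g t + h t) x n = scaled_error \<mu> g x n + scaled_error \<mu> h x n"
  unfolding scaled_error_def kantorovich_add[OF assms] by (simp add: algebra_simps)

lemma scaled_error_minus: "scaled_error \<mu> (\<lambda>t. - h t) x n = - scaled_error \<mu> h x n"
  unfolding scaled_error_def kantorovich_minus by (simp add: algebra_simps)

lemma scaled_error_cmult: "scaled_error \<mu> (\<lambda>t. c * h t) x n = c * scaled_error \<mu> h x n"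
  unfolding scaled_error_def kantorovich_cmult by (simp add: algebra_simps)

lemma scaled_error_tendsto:
  fixes h h1 :: "real \<Rightarrow> real"
  assumes "-1 < \<mu>" "0 < x" "x < 1" and hc: "continuous_on {0..1} h"
    and "\<delta> > 0" and d1: "\<And>t. \<bar>t - x\<bar> < \<delta> \<Longrightarrow> (h has_real_derivative h1 t) (at t)"
    and d2: "(h1 has_real_derivative h2) (at x)"
  shows "scaled_error \<mu> h x \<longlonglongrightarrow> Acoef \<mu> x * h1 x + Bcoef x * h2"
proof -
  have "scaled_error \<mu> h x \<longlonglongrightarrow> ((1 - 2 * x) / 2 + (x - x\<^sup>2) / (2 * (1 + \<mu>))) * h1 x + (x - x\<^sup>2) / 2 * h2"
    unfolding scaled_error_def
    using assms aseq_in_unit aseq_tendsto aseq_rate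
    by (intro kantorovich_voronovskaja[OF hc _ _ _ \<open>\<delta> > 0\<close> d1 d2]) auto
  moreover have "(1 - 2 * x) / 2 + (x - x\<^sup>2) / (2 * (1 + \<mu>)) = Acoef \<mu> x" "(x - x\<^sup>2) / 2 = Bcoef x"
    by (simp_all add: Acoef_def Bcoef_def diff_divide_distrib)
  ultimately show ?thesis by simp
qed

section \<open>A maximum principle and saturation\<close>

lemma scaled_error_limit_nonpos_at_local_max:
  assumes "-1 < \<mu>" "0 < x" "x < 1" and Pc: "continuous_on {0..1} P" and "\<eta> > 0"
    and max: "\<And>t. t \<in> {0..1} \<Longrightarrow> \<bar>t - x\<bar> < \<eta> \<Longrightarrow> P t \<le> P x"
    and lim: "scaled_error \<mu> P x \<longlonglongrightarrow> L"
  shows "L \<le> 0"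
proof -
  define y where "y n = aseq \<mu> (n+1) x" for n
  have y01: "y n \<in> {0..1}" for n
    unfolding y_def using assms aseq_in_unit by simp
  obtain C where C: "\<And>t. t \<in> {0..1} \<Longrightarrow> \<bar>P t\<bar> \<le> C"
    using continuous_on_compact_bound[OF compact_Icc Pc] by (metis real_norm_def)
  have "scaled_error \<mu> P x n \<le> 2 * C * (real n * kantorovich_tail n (y n) x \<eta>)" for n
  proof -
    have "kantorovich n P (y n) - P x = kantorovich n (\<lambda>t. P t - P x) (y n)"
      by (simp add: kantorovich_diff kantorovich_const Pc)
    also have "\<dots> \<le> kantorovich n (\<lambda>t. 0) (y n) + 2 * C * kantorovich_tail n (y n) x \<eta>"
      using C[of x] C max assms(2,3)
      by (intro kantorovich_le_tail y01 continuous_intros Pc) (fastforce simp: abs_le_iff)+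
    finally show ?thesis
      unfolding scaled_error_def y_def kantorovich_const by (simp add: mult_left_mono mult.left_commute)
  qed
  moreover have "(\<lambda>n. 2 * C * (real n * kantorovich_tail n (y n) x \<eta>)) \<longlonglongrightarrow> 2 * C * 0"
    unfolding y_def using assms aseq_in_unit aseq_tendsto
    by (intro tendsto_intros kantorovich_tail_tendsto_zero) auto
  ultimately show ?thesis
    using LIMSEQ_le[OF lim] by simp
qed

theorem scaled_error_max_principle:
  assumes "-1 < \<mu>" and Pc: "continuous_on {0..1} P" and "0 < a" "b < 1" "x \<in> {a..b}"
    and sub: "\<And>y. a < y \<Longrightarrow> y < b \<Longrightarrow> \<exists>L>0. scaled_error \<mu> P y \<longlonglongrightarrow> L"
  shows "P x \<le> max (P a) (P b)"
proof (rule ccontr)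
  assume contra: "\<not> P x \<le> max (P a) (P b)"
  have "continuous_on {a..b} P"
    using Pc by (rule continuous_on_subset) (use assms in auto)
  then obtain x1 where x1: "x1 \<in> {a..b}" and x1max: "\<And>t. t \<in> {a..b} \<Longrightarrow> P t \<le> P x1"
    using continuous_attains_sup[OF compact_Icc] assms(5) by (metis empty_iff)
  have "a < x1" "x1 < b"
    using x1 x1max[OF assms(5)] contra by (auto simp: order.order_iff_strict)
  obtain L where "L > 0" and L: "scaled_error \<mu> P x1 \<longlonglongrightarrow> L"
    using sub[OF \<open>a < x1\<close> \<open>x1 < b\<close>] by blast
  have "L \<le> 0"
    using \<open>a < x1\<close> \<open>x1 < b\<close> x1max assms(1,3,4)
    by (intro scaled_error_limit_nonpos_at_local_max[OF _ _ _ Pc _ _ L, where \<eta> = "min (x1 - a) (b - x1)"])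
       (auto simp: abs_less_iff)
  with \<open>L > 0\<close> show False by simp
qed

definition logit :: "real \<Rightarrow> real" where
  "logit t = ln t - ln (1 - t)"

lemma Acoef_Bcoef_logit:
  assumes "-1 < \<mu>" "0 < x" "x < 1"
  shows "Acoef \<mu> x * (1 / x + 1 / (1 - x)) + Bcoef x * (1 / (1 - x)\<^sup>2 - 1 / x\<^sup>2) = 1 / (2 * (1 + \<mu>))"
proof -
  define u where "u = 1 - x"
  define c where "c = 1 + \<mu>"
  have "x \<noteq> 0" "u \<noteq> 0" "c \<noteq> 0" "x = 1 - u" using assms by (simp_all add: u_def c_def)
  then show ?thesis
    unfolding Acoef_def Bcoef_def u_def[symmetric] c_def[symmetric]
    by (simp add: field_simps power2_eq_square) algebra
qed

lemma scaled_error_clamped_logit: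
  assumes "-1 < \<mu>" "0 < a" "a < y" "y < b" "b < 1"
  shows "scaled_error \<mu> (\<lambda>t. logit (max a (min b t))) y \<longlonglongrightarrow> 1 / (2 * (1 + \<mu>))"
proof -
  have "scaled_error \<mu> (\<lambda>t. logit (max a (min b t))) y \<longlonglongrightarrow>
      Acoef \<mu> y * (1 / y + 1 / (1 - y)) + Bcoef y * (1 / (1 - y)\<^sup>2 - 1 / y\<^sup>2)"
  proof (rule scaled_error_tendsto[where \<delta> = "min (y - a) (b - y)"])
    show "continuous_on {0..1} (\<lambda>t. logit (max a (min b t)))"
      unfolding logit_def using assms
      by (intro continuous_intros) (auto simp: max_def min_def)
    fix t assume "\<bar>t - y\<bar> < min (y - a) (b - y)"
    then have t: "a < t" "t < b" by auto
    have "(logit has_real_derivative 1 / t + 1 / (1 - t)) (at t)"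
      unfolding logit_def using t assms by (auto intro!: derivative_eq_intros simp: field_simps)
    then show "((\<lambda>t. logit (max a (min b t))) has_real_derivative 1 / t + 1 / (1 - t)) (at t)"
      by (rule has_field_derivative_transform_within_open[where S = "{a<..<b}"]) (use t in auto)
  next
    show "((\<lambda>t. 1 / t + 1 / (1 - t)) has_real_derivative 1 / (1 - y)\<^sup>2 - 1 / y\<^sup>2) (at y)"
      using assms by (auto intro!: derivative_eq_intros simp: field_simps power2_eq_square)
  qed (use assms in auto)
  then show ?thesis using Acoef_Bcoef_logit[of \<mu> y] assms by simp
qed

lemma exists_logit_le:
  assumes "0 < x"
  obtains a where "0 < a" "a < x" "logit a \<le> L"
proof -
  have "filterlim logit at_bot (at_right 0)"
    unfolding logit_def by real_asymp
  then have "eventually (\<lambda>a. logit a \<le> L) (at_right 0)"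
    by (simp add: filterlim_at_bot)
  moreover have "eventually (\<lambda>a. a \<in> {0<..<x}) (at_right 0)"
    using assms by (rule eventually_at_right_real)
  ultimately have "eventually (\<lambda>a. logit a \<le> L \<and> a \<in> {0<..<x}) (at_right 0)"
    by (rule eventually_conj)
  from eventually_happens'[OF trivial_limit_at_right_real this] that show thesis
    by auto
qed

lemma scaled_error_zero_imp_logit_barrier:
  assumes "-1 < \<mu>" and gc: "continuous_on {0..1} g"
    and g0: "\<And>y. 0 < y \<Longrightarrow> y < 1 \<Longrightarrow> scaled_error \<mu> g y \<longlonglongrightarrow> 0"
    and "0 < x" "x < b" "b < 1" "\<epsilon> > 0"
  shows "g x + \<epsilon> * logit x \<le> g b + \<epsilon> * logit b"
proof -
  obtain M where M: "\<And>t. t \<in> {0..1} \<Longrightarrow> \<bar>g t\<bar> \<le> M"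
    using continuous_on_compact_bound[OF compact_Icc gc] by (metis real_norm_def)
  obtain a where a: "0 < a" "a < x" "logit a \<le> logit b - 2 * M / \<epsilon>"
    using exists_logit_le[OF \<open>0 < x\<close>] .
  \<comment> \<open>\<open>logit\<close> frozen outside \<open>[a, b]\<close>, to make it continuous on \<open>[0, 1]\<close>\<close>
  define V where "V t = logit (max a (min b t))" for t
  have Vc: "continuous_on {0..1} V"
    unfolding V_def logit_def using a assms by (intro continuous_intros) (auto simp: max_def min_def)
  have "g x + \<epsilon> * V x \<le> max (g a + \<epsilon> * V a) (g b + \<epsilon> * V b)"
  proof (rule scaled_error_max_principle[where P = "\<lambda>t. g t + \<epsilon> * V t"])
    fix y assume y: "a < y" "y < b"
    have "scaled_error \<mu> (\<lambda>t. g t + \<epsilon> * V t) y = (\<lambda>n. scaled_error \<mu> g y n + \<epsilon> * scaled_error \<mu> V y n)"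
      by (simp add: scaled_error_add scaled_error_cmult gc Vc continuous_intros fun_eq_iff)
    moreover have "\<dots> \<longlonglongrightarrow> 0 + \<epsilon> * (1 / (2 * (1 + \<mu>)))"
      unfolding V_def using y a assms by (intro tendsto_intros g0 scaled_error_clamped_logit) auto
    moreover have "0 + \<epsilon> * (1 / (2 * (1 + \<mu>))) > 0"
      using \<open>\<epsilon> > 0\<close> \<open>-1 < \<mu>\<close> by simp
    ultimately show "\<exists>L>0. scaled_error \<mu> (\<lambda>t. g t + \<epsilon> * V t) y \<longlonglongrightarrow> L" by metis
  qed (use a assms in \<open>auto intro!: continuous_intros gc Vc\<close>)
  moreover have "V a = logit a" "V b = logit b" "V x = logit x"
    using a assms by (simp_all add: V_def)
  moreover have "g a + \<epsilon> * logit a \<le> g b + \<epsilon> * logit b"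
  proof -
    have "\<epsilon> * logit a \<le> \<epsilon> * logit b - 2 * M"
      using mult_left_mono[OF a(3), of \<epsilon>] \<open>\<epsilon> > 0\<close> by (simp add: right_diff_distrib)
    moreover have "g a \<le> M" "- M \<le> g b"
      using M[of a] M[of b] a assms by (simp_all add: abs_le_iff)
    ultimately show ?thesis by linarith
  qed
  ultimately show ?thesis by (simp add: max_def)
qed

lemma scaled_error_zero_imp_mono:
  assumes "-1 < \<mu>" and gc: "continuous_on {0..1} g"
    and g0: "\<And>y. 0 < y \<Longrightarrow> y < 1 \<Longrightarrow> scaled_error \<mu> g y \<longlonglongrightarrow> 0"
    and "0 < x" "x < b" "b < 1"
  shows "g x \<le> g b"
proof -
  have "((\<lambda>\<epsilon>. g b + \<epsilon> * logit b) \<longlongrightarrow> g b + 0 * logit b) (at_right 0)"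
    "((\<lambda>\<epsilon>. g x + \<epsilon> * logit x) \<longlongrightarrow> g x + 0 * logit x) (at_right 0)"
    by (intro tendsto_intros)+
  moreover have "eventually (\<lambda>\<epsilon>. g x + \<epsilon> * logit x \<le> g b + \<epsilon> * logit b) (at_right 0)"
    using eventually_at_right_less[of 0]
    by (rule eventually_mono) (rule scaled_error_zero_imp_logit_barrier[OF assms])
  ultimately have "g x + 0 * logit x \<le> g b + 0 * logit b"
    by (rule tendsto_le[OF trivial_limit_at_right_real])
  then show ?thesis by simp
qed

lemma scaled_error_zero_imp_constant:
  assumes "-1 < \<mu>" and gc: "continuous_on {0..1} g"
    and g0: "\<And>y. 0 < y \<Longrightarrow> y < 1 \<Longrightarrow> scaled_error \<mu> g y \<longlonglongrightarrow> 0"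
    and "0 < x" "x < 1" "0 < y" "y < 1"
  shows "g x = g y"
proof -
  have neg_c: "continuous_on {0..1} (\<lambda>t. - g t)"
    by (intro continuous_intros gc)
  have neg_0: "scaled_error \<mu> (\<lambda>t. - g t) y \<longlonglongrightarrow> 0" if "0 < y" "y < 1" for y
  proof -
    have "scaled_error \<mu> (\<lambda>t. - g t) y = (\<lambda>n. - scaled_error \<mu> g y n)"
      by (rule ext) (rule scaled_error_minus)
    then show ?thesis using tendsto_minus[OF g0[OF that]] by simp
  qed
  have eq: "g s = g t" if "0 < s" "s < t" "t < 1" for s t
    using scaled_error_zero_imp_mono[OF assms(1) gc g0 that]
      scaled_error_zero_imp_mono[OF assms(1) neg_c neg_0 that] by linarith
  show ?thesis
  proof (cases x y rule: linorder_cases)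
    case less
    then show ?thesis using eq[of x y] assms by simp
  next
    case greater
    then show ?thesis using eq[of y x] assms by simp
  qed simp
qed

lemma ode_imp_scaled_error_tendsto_zero:
  assumes "-1 < \<mu>" and gc: "continuous_on {0..1} g" and x: "x \<in> {0<..<1}"
    and ode: "\<forall>x\<in>{0<..<1}. (g has_real_derivative g1 x) (at x) \<and> (g1 has_real_derivative g2 x) (at x)
        \<and> Acoef \<mu> x * g1 x + Bcoef x * g2 x = 0"
  shows "scaled_error \<mu> g x \<longlonglongrightarrow> 0"
proof -
  have "scaled_error \<mu> g x \<longlonglongrightarrow> Acoef \<mu> x * g1 x + Bcoef x * g2 x"
  proof (rule scaled_error_tendsto[OF \<open>-1 < \<mu>\<close> _ _ gc, where \<delta> = "min x (1 - x)"])
    fix t assume "\<bar>t - x\<bar> < min x (1 - x)"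
    then have "t \<in> {0<..<1}" by (auto simp: abs_less_iff)
    then show "(g has_real_derivative g1 t) (at t)" using ode by blast
  qed (use ode x in auto)
  with ode x show ?thesis by simp
qed

theorem scaled_error_tendsto_zero_iff_ode:
  assumes "-1 < \<mu>" and gc: "continuous_on {0..1} g"
  shows "(\<forall>x\<in>{0<..<1}. scaled_error \<mu> g x \<longlonglongrightarrow> 0) \<longleftrightarrow>
    (\<exists>g1 g2. \<forall>x\<in>{0<..<1}. (g has_real_derivative g1 x) (at x) \<and> (g1 has_real_derivative g2 x) (at x)
        \<and> Acoef \<mu> x * g1 x + Bcoef x * g2 x = 0)"
proof
  assume "\<forall>x\<in>{0<..<1}. scaled_error \<mu> g x \<longlonglongrightarrow> 0"
  then have const: "g (1/2) = g x" if "x \<in> {0<..<1}" for x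
    using that by (intro scaled_error_zero_imp_constant[OF \<open>-1 < \<mu>\<close> gc]) auto
  have "(g has_real_derivative 0) (at x)" if "x \<in> {0<..<1}" for x
    by (rule has_field_derivative_transform_within_open[OF DERIV_const[of "g (1/2)"] _ that])
       (simp_all add: const)
  then show "\<exists>g1 g2. \<forall>x\<in>{0<..<1}. (g has_real_derivative g1 x) (at x) \<and> (g1 has_real_derivative g2 x) (at x)
      \<and> Acoef \<mu> x * g1 x + Bcoef x * g2 x = 0"
    by (intro exI[of _ "\<lambda>_. 0"]) simp
qed (use ode_imp_scaled_error_tendsto_zero[OF assms] in blast)

section \<open>The operators \<open>LK\<close>\<close>

lemma LK_eq_kantorovich:
  "LK \<mu> n f x = lnmu \<mu> x * kantorovich n (fmu \<mu> f) (aseq \<mu> (n+1) x)"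
  unfolding LK_def kantorovich_def pnk_def Bernstein_def by (simp add: atLeast0AtMost)

lemma lnmu_pos: "0 < \<mu> \<Longrightarrow> 0 \<le> x \<Longrightarrow> 0 < lnmu \<mu> x"
  unfolding lnmu_def by (intro ln_gt_zero) simp

lemma continuous_on_fmu:
  assumes "0 < \<mu>" "continuous_on {0..1} f"
  shows "continuous_on {0..1} (fmu \<mu> f)"
  unfolding fmu_def lnmu_def using assms
  by (intro continuous_intros) (auto dest: ln_gt_zero[THEN less_imp_neq, symmetric])

lemma LK_error_smallo_iff:
  assumes "0 < \<mu>" "0 \<le> x"
  shows "(\<lambda>n. \<bar>LK \<mu> n f x - f x\<bar>) \<in> o(\<lambda>n. 1 / real n) \<longleftrightarrow> scaled_error \<mu> (fmu \<mu> f) x \<longlonglongrightarrow> 0"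
proof -
  have L: "lnmu \<mu> x > 0" by (rule lnmu_pos[OF assms])
  have ratio: "\<bar>LK \<mu> n f x - f x\<bar> / (1 / real n) = lnmu \<mu> x * \<bar>scaled_error \<mu> (fmu \<mu> f) x n\<bar>" for n
  proof -
    have "LK \<mu> n f x - f x = lnmu \<mu> x * (kantorovich n (fmu \<mu> f) (aseq \<mu> (n+1) x) - fmu \<mu> f x)"
      using L by (simp add: LK_eq_kantorovich fmu_def algebra_simps)
    then show ?thesis using L by (simp add: scaled_error_def abs_mult)
  qed
  have ev: "eventually (\<lambda>n. 1 / real n \<noteq> 0) sequentially"
    using eventually_gt_at_top[of "0::nat"] by eventually_elim simp
  have "(\<lambda>n. \<bar>LK \<mu> n f x - f x\<bar>) \<in> o(\<lambda>n. 1 / real n) \<longleftrightarrow>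
      (\<lambda>n. \<bar>LK \<mu> n f x - f x\<bar> / (1 / real n)) \<longlonglongrightarrow> 0"
  proof
    show "(\<lambda>n. \<bar>LK \<mu> n f x - f x\<bar> / (1 / real n)) \<longlonglongrightarrow> 0"
      if "(\<lambda>n. \<bar>LK \<mu> n f x - f x\<bar>) \<in> o(\<lambda>n. 1 / real n)"
      using that by (rule smalloD_tendsto)
    show "(\<lambda>n. \<bar>LK \<mu> n f x - f x\<bar>) \<in> o(\<lambda>n. 1 / real n)"
      if "(\<lambda>n. \<bar>LK \<mu> n f x - f x\<bar> / (1 / real n)) \<longlonglongrightarrow> 0"
      using that ev by (rule smalloI_tendsto)
  qed
  also have "\<dots> \<longleftrightarrow> (\<lambda>n. lnmu \<mu> x * \<bar>scaled_error \<mu> (fmu \<mu> f) x n\<bar>) \<longlonglongrightarrow> lnmu \<mu> x * 0"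
    unfolding ratio by simp
  also have "\<dots> \<longleftrightarrow> scaled_error \<mu> (fmu \<mu> f) x \<longlonglongrightarrow> 0"
    using L by (simp add: tendsto_rabs_zero_iff)
  finally show ?thesis .
qed

theorem theorem5p1:
  fixes \<mu> :: real and f :: "real \<Rightarrow> real"
  assumes "\<mu> > 0" and "continuous_on {0..1} f"
  shows "(\<forall>x\<in>{0<..<1}. (\<lambda>n. \<bar>LK \<mu> n f x - f x\<bar>) \<in> o(\<lambda>n. 1 / real n))
     \<longleftrightarrow> (\<exists>f1 f2. \<forall>x\<in>{0<..<1::real}.
            (fmu \<mu> f has_real_derivative f1 x) (at x) \<and>
            (f1 has_real_derivative f2 x) (at x) \<and>
            Acoef \<mu> x * f1 x + Bcoef x * f2 x = 0)"
proof -
  have "(\<forall>x\<in>{0<..<1}. (\<lambda>n. \<bar>LK \<mu> n f x - f x\<bar>) \<in> o(\<lambda>n. 1 / real n)) \<longleftrightarrow>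
      (\<forall>x\<in>{0<..<1}. scaled_error \<mu> (fmu \<mu> f) x \<longlonglongrightarrow> 0)"
    using LK_error_smallo_iff[OF assms(1)] by simp
  also have "\<dots> \<longleftrightarrow> (\<exists>f1 f2. \<forall>x\<in>{0<..<1::real}. (fmu \<mu> f has_real_derivative f1 x) (at x) \<and>
      (f1 has_real_derivative f2 x) (at x) \<and> Acoef \<mu> x * f1 x + Bcoef x * f2 x = 0)"
    using assms by (intro scaled_error_tendsto_zero_iff_ode continuous_on_fmu) auto
  finally show ?thesis .
qed

end
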